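(* Let $A:\mathbb{R}\to\mathbb{R}^{n\times n}$, $t\mapsto A(t)=(a_{kl}(t))$, be piecewise continuous such that for every $t$ the matrix $A(t)$ is Metzler with zero row sums, and let $\zeta$ be a solution of $\dot{x}=A(t)x$ defined on $[t_0,t_1]$. Let $G,H$ be nonempty disjoint sets with $G\cup H=\{1,\dots,n\}$, and define $a_{GH}=\sum_{k\in G,\,l\in H}\int_{t_0}^{t_1}a_{kl}(t)\,\mathrm{d}t$, $a_{HG}=\sum_{k\in H,\,l\in G}\int_{t_0}^{t_1}a_{kl}(t)\,\mathrm{d}t$, $a_{HH}=\sum_{k,l\in H,\,k\neq l}\int_{t_0}^{t_1}a_{kl}(t)\,\mathrm{d}t$. Let $g^{\min}=\min_{k\in G}\zeta_k(t_0)$, $g^{\max}=\max_{k\in G}\zeta_k(t_0)$, and let $\mu^{\min},\mu^{\max}$ be real numbers with $\mu^{\min}\le\min_{1\le k\le n}\zeta_k(t_0)$ and $\mu^{\max}\ge\max_{1\le k\le n}\zeta_k(t_0)$. Then: (i) every component $\zeta_k(t_1)$ with $k\in G$ lies in the interval $[\mu^{\min}+(g^{\min}-\mu^{\min})e^{-a_{GH}},\ \mu^{\max}-(\mu^{\max}-g^{\max})e^{-a_{GH}}]$; (ii) at least one component $\zeta_k(t_1)$ with $k\in H$ lies in the interval $[\mu^{\min}+(g^{\min}-\mu^{\min})\beta,\ \mu^{\max}-(\mu^{\max}-g^{\max})\beta]$, where $$\beta=\frac{e^{-a_{GH}}\,a_{HG}/|H|}{1+e^{a_{HH}}a_{HG}/|H|+e^{a_{HH}}a_{HH}}$$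 and $|H|$ is the number of elements of $H$.
   Context: A real square matrix is Metzler if all its off-diagonal entries are nonnegative; it has zero row sums if each of its rows sums to zero. *)

theory Defs
  imports "HOL-Analysis.Analysis"
begin

definition metzler :: "real^'n^'n \<Rightarrow> bool" where
  "metzler M \<longleftrightarrow> (\<forall>k l. k \<noteq> l \<longrightarrow> 0 \<le> M $ k $ l)"

definition zero_row_sums :: "real^'n^'n \<Rightarrow> bool" where
  "zero_row_sums M \<longleftrightarrow> (\<forall>k. (\<Sum>l\<in>UNIV. M $ k $ l) = 0)"

definition piecewise_continuous :: "(real \<Rightarrow> 'a::topological_space) \<Rightarrow> bool" where
  "piecewise_continuous f \<longleftrightarrow>
     (\<forall>a b. \<exists>S. finite S \<and> continuous_on ({a..b} - S) f \<and>
        (\<forall>s\<in>S. (\<exists>l. (f \<longlongrightarrow> l) (at_left s)) \<and> (\<exists>r. (f \<longlongrightarrow> r) (at_right s))))"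

text \<open>Solution of x' = A(t) x on [t0,t1] (in the Caratheodory / integral sense, which is the
  appropriate notion for piecewise continuous coefficients): continuous, and
  x(t) = x(t0) + integral from t0 to t of A(s) x(s) ds for all t in [t0,t1].\<close>
definition is_solution_on ::
  "(real \<Rightarrow> real^'n^'n) \<Rightarrow> (real \<Rightarrow> real^'n) \<Rightarrow> real \<Rightarrow> real \<Rightarrow> bool" where
  "is_solution_on A x t0 t1 \<longleftrightarrow>
     continuous_on {t0..t1} x \<and>
     (\<forall>t\<in>{t0..t1}. ((\<lambda>s. A s *v x s) has_integral (x t - x t0)) {t0..t})"

end

theory Submission
  imports Defs
begin

(* A Metzler matrix with zero row sums annihilates constant vectors and generates an
   order-preserving flow: if z is continuous, z' <= A z off finitely many points and
   z(t0) <= zeta(t0) componentwise, then z <= zeta on [t0, t1] (Gronwall's inequality applied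
   to the total negative part of zeta - z).  After subtracting mu and dividing by g - mu it
   therefore suffices to exhibit one such lower solution starting from the indicator of G.
   It is exp(-C(t)) on G, where C is the accumulated coupling from G to H; on the node k of H
   most strongly coupled to G it is exp(-C(t1)) exp(-R(t)) (1 - exp(-P(t))), where P and R are
   the accumulated couplings of k to G and to the rest of H; and it is 0 elsewhere.  Since k
   receives at least the average coupling a_HG / |H|, the inequalities
   1 - exp(-h) >= h / (1 + h) and exp(X) (1 - X) <= 1 bound its value at k below by beta.
   The upper bounds are the lower bounds for -zeta. *)

section \<open>Real functions continuous off a finite set\<close>

lemma piecewise_continuous_locally_bounded:
  fixes f :: "real \<Rightarrow> 'a::real_normed_vector"
  assumes S: "finite S" and cont: "continuous_on ({a..b} - S) f"
    and lim: "\<forall>s\<in>S. (\<exists>l. (f \<longlongrightarrow> l) (at_left s)) \<and> (\<exists>r. (f \<longlongrightarrow> r) (at_right s))"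
    and x: "x \<in> {a..b}"
  shows "\<exists>d>0. \<exists>B. \<forall>y\<in>{a..b}. dist y x < d \<longrightarrow> norm (f y) \<le> B"
proof (cases "x \<in> S")
  case True
  then obtain l r where l: "(f \<longlongrightarrow> l) (at_left x)" and r: "(f \<longlongrightarrow> r) (at_right x)"
    using lim by blast
  define B where "B = norm l + norm r + 1"
  have "norm l < B" "norm r < B"
    using norm_ge_zero[of l] norm_ge_zero[of r] unfolding B_def by linarith+
  then have "eventually (\<lambda>y. norm (f y) < B) (at_left x)" "eventually (\<lambda>y. norm (f y) < B) (at_right x)"
    using order_tendstoD(2)[OF tendsto_norm] l r by blast+
  then have "eventually (\<lambda>y. norm (f y) < B) (at x)"
    by (simp add: eventually_at_split)
  then obtain d where "d > 0" "\<forall>y. y \<noteq> x \<and> dist y x < d \<longrightarrow> norm (f y) < B"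
    by (auto simp: eventually_at)
  then have "norm (f y) \<le> max (norm (f x)) B" if "dist y x < d" for y
    using that by (cases "y = x") auto
  then show ?thesis
    using \<open>d > 0\<close> by blast
next
  case False
  then have "(f \<longlongrightarrow> f x) (at x within {a..b} - S)"
    using cont x by (simp add: continuous_on_def)
  then have "eventually (\<lambda>y. norm (f y) < norm (f x) + 1) (at x within {a..b} - S)"
    by (rule order_tendstoD(2)[OF tendsto_norm]) simp
  then obtain d where d: "d > 0" "\<forall>y\<in>{a..b} - S. y \<noteq> x \<and> dist y x < d \<longrightarrow> norm (f y) < norm (f x) + 1"
    by (auto simp: eventually_at)
  obtain e where e: "e > 0" "\<forall>y\<in>S. y \<noteq> x \<longrightarrow> e \<le> dist x y"
    using finite_set_avoid[OF S] by blast
  have "norm (f y) \<le> norm (f x) + 1" if y: "y \<in> {a..b}" "dist y x < min d e" for y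
  proof (cases "y = x")
    case False
    then have "y \<notin> S"
      using e y by (auto simp: dist_commute)
    then show ?thesis
      using d y False by auto
  qed simp
  moreover have "min d e > 0"
    using d e by simp
  ultimately show ?thesis
    by blast
qed

lemma piecewise_continuous_bounded:
  fixes f :: "real \<Rightarrow> 'a::real_normed_vector"
  assumes "piecewise_continuous f"
  shows "\<exists>B. \<forall>x\<in>{a..b}. norm (f x) \<le> B"
proof -
  obtain S where "finite S" "continuous_on ({a..b} - S) f"
    "\<forall>s\<in>S. (\<exists>l. (f \<longlongrightarrow> l) (at_left s)) \<and> (\<exists>r. (f \<longlongrightarrow> r) (at_right s))"
    using assms unfolding piecewise_continuous_def by blast
  then obtain d B where dB: "\<And>x. x \<in> {a..b} \<Longrightarrow> d x > 0 \<and> (\<forall>y\<in>{a..b}. dist y x < d x \<longrightarrow> norm (f y) \<le> B x)"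
    using piecewise_continuous_locally_bounded by metis
  have "x \<in> ball x (d x)" if "x \<in> {a..b}" for x
    using dB[OF that] by simp
  then have "{a..b} \<subseteq> (\<Union>x\<in>{a..b}. ball x (d x))"
    by auto
  then obtain D where D: "D \<subseteq> {a..b}" "finite D" "{a..b} \<subseteq> (\<Union>x\<in>D. ball x (d x))"
    using compactE_image[OF compact_Icc, of "{a..b}" "\<lambda>x. ball x (d x)"] by blast
  have "norm (f y) \<le> (\<Sum>x\<in>D. \<bar>B x\<bar>)" if y: "y \<in> {a..b}" for y
  proof -
    obtain x where x: "x \<in> D" "y \<in> ball x (d x)"
      using D y by blast
    then have "norm (f y) \<le> B x"
      using dB[of x] D y by (auto simp: dist_commute)
    also have "\<dots> \<le> \<bar>B x\<bar>"
      by simp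
    also have "\<dots> \<le> (\<Sum>x\<in>D. \<bar>B x\<bar>)"
      using x D by (intro member_le_sum) auto
    finally show ?thesis .
  qed
  then show ?thesis
    by blast
qed

definition bdd_continuous_off :: "real set \<Rightarrow> real \<Rightarrow> real \<Rightarrow> (real \<Rightarrow> real) \<Rightarrow> bool" where
  "bdd_continuous_off S a b g \<longleftrightarrow> continuous_on ({a..b} - S) g \<and> (\<exists>B. \<forall>x\<in>{a..b}. \<bar>g x\<bar> \<le> B)"

lemma bdd_continuous_off_continuous:
  assumes "continuous_on {a..b} g"
  shows "bdd_continuous_off S a b g"
proof -
  have "bounded (g ` {a..b})"
    using assms by (intro compact_imp_bounded compact_continuous_image) auto
  then show ?thesis
    using assms unfolding bdd_continuous_off_def bounded_iff by (auto intro: continuous_on_subset)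
qed

lemma bdd_continuous_off_add:
  assumes "bdd_continuous_off S a b f" "bdd_continuous_off S a b g"
  shows "bdd_continuous_off S a b (\<lambda>x. f x + g x)"
proof -
  obtain B C where "\<forall>x\<in>{a..b}. \<bar>f x\<bar> \<le> B" "\<forall>x\<in>{a..b}. \<bar>g x\<bar> \<le> C"
    using assms unfolding bdd_continuous_off_def by blast
  then have "\<forall>x\<in>{a..b}. \<bar>f x + g x\<bar> \<le> B + C"
    by (auto intro: order_trans[OF abs_triangle_ineq] add_mono)
  then show ?thesis
    using assms unfolding bdd_continuous_off_def by (auto intro: continuous_intros)
qed

lemma bdd_continuous_off_mult:
  assumes "bdd_continuous_off S a b f" "bdd_continuous_off S a b g"
  shows "bdd_continuous_off S a b (\<lambda>x. f x * g x)"
proof -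
  obtain B C where "\<forall>x\<in>{a..b}. \<bar>f x\<bar> \<le> B" "\<forall>x\<in>{a..b}. \<bar>g x\<bar> \<le> C"
    using assms unfolding bdd_continuous_off_def by blast
  then have "\<forall>x\<in>{a..b}. \<bar>f x * g x\<bar> \<le> B * C"
    by (auto simp: abs_mult intro!: mult_mono order_trans[OF abs_ge_zero])
  then show ?thesis
    using assms unfolding bdd_continuous_off_def by (auto intro: continuous_intros)
qed

lemma bdd_continuous_off_sum:
  assumes "finite I" "\<And>i. i \<in> I \<Longrightarrow> bdd_continuous_off S a b (f i)"
  shows "bdd_continuous_off S a b (\<lambda>x. \<Sum>i\<in>I. f i x)"
  using assms
  by (induction I rule: finite_induct)
    (auto intro: bdd_continuous_off_add bdd_continuous_off_continuous)

lemma bdd_continuous_off_integrable: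
  assumes S: "finite S" and g: "bdd_continuous_off S a b g" and st: "a \<le> s" "t \<le> b"
  shows "g integrable_on {s..t}"
proof -
  obtain B where cont: "continuous_on ({s..t} - S) g" and bnd: "\<And>x. x \<in> {s..t} - S \<Longrightarrow> \<bar>g x\<bar> \<le> B"
    using g st unfolding bdd_continuous_off_def by (force intro: continuous_on_subset)
  have L: "{s..t} - S \<in> sets lebesgue"
    using S by (simp add: finite_imp_closed closed_Diff sets.Diff)
  have "(\<lambda>x. B) integrable_on ({s..t} - S)"
    using S by (intro integrable_on_const fmeasurable_Diff) (auto simp: finite_imp_closed)
  then have "g integrable_on ({s..t} - S)"
    using measurable_bounded_by_integrable_imp_integrable_real
      [OF continuous_imp_measurable_on_sets_lebesgue[OF cont L] _ _ L] bnd
    by auto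
  then show ?thesis
    by (rule integrable_spike_set) (auto intro: negligible_subset[OF negligible_finite[OF S]])
qed

lemma bdd_continuous_off_integral_deriv:
  assumes S: "finite S" and g: "bdd_continuous_off S a b g" and st: "a \<le> s" "t \<le> b"
    and x: "x \<in> {s<..<t} - S"
  shows "((\<lambda>u. integral {s..u} g) has_real_derivative g x) (at x)"
proof -
  have "continuous_on ({a<..<b} - S) g"
    using g unfolding bdd_continuous_off_def by (auto intro: continuous_on_subset)
  moreover have "open ({a<..<b} - S)"
    using S by (simp add: finite_imp_closed open_Diff)
  ultimately have "isCont g x"
    using x st by (auto simp: continuous_on_eq_continuous_at)
  then have "((\<lambda>u. integral {s..u} g) has_vector_derivative g x) (at x within {s..t} - {})"
    using x bdd_continuous_off_integrable[OF S g st]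
    by (intro integral_has_vector_derivative_continuous_at)
      (auto intro: continuous_at_imp_continuous_at_within)
  then show ?thesis
    using x by (simp add: has_real_derivative_iff_has_vector_derivative at_within_Icc_at)
qed

lemma DERIV_nonneg_off_finite_imp_le:
  fixes f :: "real \<Rightarrow> real"
  assumes S: "finite S" and ab: "a \<le> b" and cont: "continuous_on {a..b} f"
    and deriv: "\<And>x. x \<in> {a<..<b} - S \<Longrightarrow> (f has_real_derivative f' x) (at x) \<and> 0 \<le> f' x"
  shows "f a \<le> f b"
proof -
  define g where "g x = (if x \<in> {a<..<b} - S then f' x else 0)" for x
  have "(g has_integral (f b - f a)) {a..b}"
    using deriv
    by (intro fundamental_theorem_of_calculus_interior_strong[OF S ab _ cont])
      (simp add: g_def has_real_derivative_iff_has_vector_derivative)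
  moreover have "\<And>x. 0 \<le> g x"
    using deriv by (simp add: g_def)
  ultimately have "0 \<le> f b - f a"
    by (rule has_integral_nonneg)
  then show ?thesis
    by simp
qed

lemma gronwall_nonpos:
  fixes N :: "real \<Rightarrow> real"
  assumes ab: "a \<le> b" and cont: "continuous_on {a..b} N" and L: "0 \<le> L"
    and le: "\<And>t. t \<in> {a..b} \<Longrightarrow> N t \<le> L * integral {a..t} N"
    and t: "t \<in> {a..b}"
  shows "N t \<le> 0"
proof -
  define F where "F u = integral {a..u} N" for u
  have F_cont: "continuous_on {a..b} F"
    unfolding F_def by (intro indefinite_integral_continuous_1 integrable_continuous_interval cont)
  have F_deriv: "(F has_real_derivative N x) (at x)" if "x \<in> {a<..<b}" for x
  proof -
    have "(F has_vector_derivative N x) (at x within {a..b})"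
      unfolding F_def using that by (intro integral_has_vector_derivative[OF cont]) auto
    then show ?thesis
      using that by (simp add: has_real_derivative_iff_has_vector_derivative at_within_Icc_at)
  qed
  \<comment> \<open>\<open>exp (- L u) F u\<close> is decreasing and vanishes at \<open>a\<close>, so \<open>F \<le> 0\<close>.\<close>
  have "- (exp (- L * a) * F a) \<le> - (exp (- L * t) * F t)"
  proof (rule DERIV_nonneg_off_finite_imp_le[of "{}" a t "\<lambda>u. - (exp (- L * u) * F u)"
        "\<lambda>x. exp (- L * x) * (L * F x - N x)"])
    show "continuous_on {a..t} (\<lambda>u. - (exp (- L * u) * F u))"
      using t by (intro continuous_intros continuous_on_subset[OF F_cont]) auto
    fix x assume x: "x \<in> {a<..<t} - {}"
    then have "x \<in> {a<..<b}" using t by auto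
    then show "((\<lambda>u. - (exp (- L * u) * F u)) has_real_derivative exp (- L * x) * (L * F x - N x)) (at x)
        \<and> 0 \<le> exp (- L * x) * (L * F x - N x)"
      using le[of x] unfolding F_def[symmetric]
      by (auto intro!: derivative_eq_intros F_deriv simp: algebra_simps)
  qed (use t in auto)
  then have "F t \<le> 0"
    by (simp add: F_def mult_le_0_iff)
  then have "L * F t \<le> 0"
    using L by (simp add: mult_nonneg_nonpos)
  then show ?thesis
    using le[OF t] by (simp add: F_def)
qed

lemma continuous_last_zero:
  fixes f :: "real \<Rightarrow> real"
  assumes ab: "a \<le> b" and cont: "continuous_on {a..b} f" and fa: "0 \<le> f a" and fb: "f b < 0"
  obtains s where "a \<le> s" "s \<le> b" "f s = 0" "\<And>x. x \<in> {s..b} \<Longrightarrow> f x \<le> 0"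
proof -
  define T where "T = {a..b} \<inter> f -` {0..}"
  have "closed T"
    unfolding T_def using cont by (rule continuous_closed_preimage) auto
  moreover have T: "a \<in> T" "bdd_above T"
    using ab fa by (auto simp: T_def intro: bdd_aboveI[of _ b])
  ultimately have "Sup T \<in> T"
    using closed_contains_Sup by blast
  define s where "s = Sup T"
  have s: "a \<le> s" "s \<le> b" "0 \<le> f s"
    using \<open>Sup T \<in> T\<close> by (auto simp: T_def s_def)
  have upper: "x \<le> s" if "x \<in> {a..b}" "0 \<le> f x" for x
    unfolding s_def using that by (intro cSup_upper T(2)) (simp add: T_def)
  have "continuous_on {s..b} f"
    using cont s by (auto intro: continuous_on_subset)
  then obtain z where z: "s \<le> z" "z \<le> b" "f z = 0"
    using IVT2'[of f b 0 s] s fb by auto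
  then have "z = s"
    using upper[of z] s by simp
  show ?thesis
  proof (rule that[of s])
    show fs: "f s = 0"
      using z \<open>z = s\<close> by simp
    fix x assume x: "x \<in> {s..b}"
    show "f x \<le> 0"
    proof (rule ccontr)
      assume "\<not> f x \<le> 0"
      then have "x = s"
        using upper[of x] s x by simp
      then show False
        using fs \<open>\<not> f x \<le> 0\<close> by simp
    qed
  qed (use s in auto)
qed

lemma fraction_le_exp_one_minus_exp:
  fixes h P R X :: real
  assumes h: "0 \<le> h" "h \<le> P" and R: "0 \<le> R" "R \<le> X"
  shows "h / (1 + exp X * h + exp X * X) \<le> exp (- R) * (1 - exp (- P))"
proof -
  have "h / (1 + h) \<le> 1 - exp (- h)"
    using exp_ge_add_one_self[of h] h by (simp add: exp_minus field_simps)
  also have "\<dots> \<le> 1 - exp (- P)"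
    using h by simp
  finally have P_bound: "h / (1 + h) \<le> 1 - exp (- P)" .
  have "exp X * (1 - X) \<le> 1"
    using exp_ge_add_one_self[of "- X"] by (simp add: exp_minus field_simps)
  then have denom: "exp X * (1 + h) \<le> 1 + exp X * h + exp X * X"
    by (simp add: algebra_simps)
  have "h / (1 + exp X * h + exp X * X) \<le> h / (exp X * (1 + h))"
  proof (rule divide_left_mono[OF denom h(1)])
    show "0 < (1 + exp X * h + exp X * X) * (exp X * (1 + h))"
    proof (rule mult_pos_pos)
      show "0 < exp X * (1 + h)"
        using h by simp
      then show "0 < 1 + exp X * h + exp X * X"
        using denom by linarith
    qed
  qed
  also have "\<dots> = exp (- X) * (h / (1 + h))"
    by (simp add: exp_minus field_simps)
  also have "\<dots> \<le> exp (- R) * (1 - exp (- P))"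
    using P_bound R h by (intro mult_mono) auto
  finally show ?thesis .
qed

lemma is_solution_on_uminus:
  fixes A :: "real \<Rightarrow> real^'n^'n"
  assumes "is_solution_on A x t0 t1"
  shows "is_solution_on A (\<lambda>t. - x t) t0 t1"
proof -
  have "M *v (- v) = - (M *v v)" for M :: "real^'n^'n" and v :: "real^'n"
    by (metis diff_0 matrix_vector_mult_0_right matrix_vector_mult_diff_distrib)
  then show ?thesis
    using assms unfolding is_solution_on_def
    by (auto intro: continuous_intros simp: has_integral_neg_iff)
qed

section \<open>Comparison principle for Metzler systems with zero row sums\<close>

definition neg_part_sum :: "real^'n \<Rightarrow> real" where
  "neg_part_sum y = (\<Sum>l\<in>UNIV. max 0 (- y $ l))"

lemma neg_part_sum_nonneg: "0 \<le> neg_part_sum y"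
  unfolding neg_part_sum_def by (intro sum_nonneg) auto

lemma neg_part_le_neg_part_sum: "max 0 (- y $ k) \<le> neg_part_sum y"
  unfolding neg_part_sum_def by (rule member_le_sum) auto

lemma continuous_on_neg_part_sum: "continuous_on S y \<Longrightarrow> continuous_on S (\<lambda>x. neg_part_sum (y x))"
  unfolding neg_part_sum_def by (intro continuous_intros)

locale consensus_system =
  fixes A :: "real \<Rightarrow> real^'n^'n" and t0 t1 K :: real and S :: "real set"
  assumes t0_le_t1: "t0 \<le> t1" and finite_S: "finite S"
    and continuous_A: "continuous_on ({t0..t1} - S) A"
    and bounded_A: "\<And>x k l. x \<in> {t0..t1} \<Longrightarrow> \<bar>A x $ k $ l\<bar> \<le> K"
    and metzler_A: "\<And>x. metzler (A x)" and zero_row_sums_A: "\<And>x. zero_row_sums (A x)"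

lemma consensus_system_if_piecewise_continuous:
  fixes A :: "real \<Rightarrow> real^'n^'n"
  assumes pc: "piecewise_continuous A" and MZ: "\<And>t. metzler (A t) \<and> zero_row_sums (A t)"
    and t01: "t0 \<le> t1"
  obtains K S where "consensus_system A t0 t1 K S"
proof -
  obtain S where "finite S" "continuous_on ({t0..t1} - S) A"
    using pc unfolding piecewise_continuous_def by blast
  moreover obtain K where K: "\<forall>x\<in>{t0..t1}. norm (A x) \<le> K"
    using piecewise_continuous_bounded[OF pc] by blast
  have "\<bar>A x $ k $ l\<bar> \<le> K" if "x \<in> {t0..t1}" for x k l
  proof -
    have "\<bar>A x $ k $ l\<bar> \<le> norm (A x $ k)"
      by (rule component_le_norm_cart)
    also have "\<dots> \<le> norm (A x)"
      by (rule Finite_Cartesian_Product.norm_nth_le)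
    also have "\<dots> \<le> K"
      using K that by auto
    finally show ?thesis .
  qed
  ultimately have "consensus_system A t0 t1 K S"
    using MZ t01 by (simp add: consensus_system_def)
  then show ?thesis
    by (rule that)
qed

context consensus_system
begin

lemma K_nonneg: "0 \<le> K"
  using bounded_A[of t0] t0_le_t1 by (meson abs_ge_zero atLeastAtMost_iff order_refl order_trans)

lemma offdiag_nonneg: "k \<noteq> l \<Longrightarrow> 0 \<le> A x $ k $ l"
  using metzler_A by (simp add: metzler_def)

lemma entry_bdd_continuous_off: "bdd_continuous_off S t0 t1 (\<lambda>x. A x $ k $ l)"
  unfolding bdd_continuous_off_def using bounded_A
  by (auto intro!: continuous_intros continuous_A exI[of _ K])

lemma matrix_vector_mult_bdd_continuous_off:
  assumes "continuous_on {t0..t1} v"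
  shows "bdd_continuous_off S t0 t1 (\<lambda>x. (A x *v v x) $ k)"
  unfolding matrix_vector_mult_def vec_lambda_beta
  using assms
  by (intro bdd_continuous_off_sum bdd_continuous_off_mult entry_bdd_continuous_off
      bdd_continuous_off_continuous continuous_intros) auto

lemma matrix_vector_mult_integrable:
  assumes "continuous_on {t0..t1} v" "t0 \<le> s" "t \<le> t1"
  shows "(\<lambda>x. (A x *v v x) $ k) integrable_on {s..t}"
  using bdd_continuous_off_integrable[OF finite_S matrix_vector_mult_bdd_continuous_off[OF assms(1)]] assms(2,3) .

lemma matrix_vector_mult_eq_sum_diff: "(A x *v v) $ i = (\<Sum>l\<in>UNIV. A x $ i $ l * (v $ l - v $ i))"
proof -
  have "(\<Sum>l\<in>UNIV. A x $ i $ l * (v $ l - v $ i))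
      = (\<Sum>l\<in>UNIV. A x $ i $ l * v $ l) - (\<Sum>l\<in>UNIV. A x $ i $ l) * v $ i"
    by (simp add: right_diff_distrib sum_subtractf sum_distrib_right)
  then show ?thesis
    using zero_row_sums_A[of x] by (simp add: zero_row_sums_def matrix_vector_mult_def)
qed

lemma matrix_vector_mult_ge_sum:
  assumes J: "J \<subseteq> UNIV - {i}"
    and u: "\<And>l. l \<in> J \<Longrightarrow> u l \<le> v $ l - v $ i"
    and rest: "\<And>l. l \<notin> J \<Longrightarrow> l \<noteq> i \<Longrightarrow> 0 \<le> v $ l - v $ i"
  shows "(\<Sum>l\<in>J. A x $ i $ l * u l) \<le> (A x *v v) $ i"
proof -
  have "(\<Sum>l\<in>J. A x $ i $ l * u l) \<le> (\<Sum>l\<in>J. A x $ i $ l * (v $ l - v $ i))"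
    using J u by (intro sum_mono mult_left_mono offdiag_nonneg) auto
  also have "\<dots> \<le> (\<Sum>l\<in>UNIV. A x $ i $ l * (v $ l - v $ i))"
  proof (rule sum_mono2)
    fix l assume "l \<in> UNIV - J"
    then show "0 \<le> A x $ i $ l * (v $ l - v $ i)"
      using rest by (cases "l = i") (auto intro!: mult_nonneg_nonneg offdiag_nonneg)
  qed auto
  finally show ?thesis
    by (simp add: matrix_vector_mult_eq_sum_diff)
qed

lemma matrix_vector_mult_ge_neg_part:
  assumes x: "x \<in> {t0..t1}" and yk: "y $ k \<le> 0"
  shows "- (K * neg_part_sum y) \<le> (A x *v y) $ k"
proof -
  have "(\<Sum>l\<in>UNIV - {k}. A x $ k $ l * max 0 (- y $ l)) \<le> (\<Sum>l\<in>UNIV - {k}. K * max 0 (- y $ l))"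
    using bounded_A[OF x] by (intro sum_mono mult_right_mono) (auto simp: abs_le_iff)
  also have "\<dots> \<le> (\<Sum>l\<in>UNIV. K * max 0 (- y $ l))"
    using K_nonneg by (intro sum_mono2) auto
  finally have "- (K * neg_part_sum y) \<le> (\<Sum>l\<in>UNIV - {k}. A x $ k $ l * - max 0 (- y $ l))"
    by (simp add: neg_part_sum_def sum_distrib_left sum_negf)
  also have "\<dots> \<le> (A x *v y) $ k"
    using yk by (intro matrix_vector_mult_ge_sum) auto
  finally show ?thesis .
qed

lemma neg_part_le_integral:
  assumes y_cont: "continuous_on {t0..t1} y"
    and y_super: "\<And>s u k. t0 \<le> s \<Longrightarrow> s \<le> u \<Longrightarrow> u \<le> t1 \<Longrightarrow>
        integral {s..u} (\<lambda>x. (A x *v y x) $ k) \<le> y u $ k - y s $ k"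
    and y0: "\<And>k. 0 \<le> y t0 $ k" and t: "t \<in> {t0..t1}"
  defines "N \<equiv> \<lambda>x. neg_part_sum (y x)"
  shows "max 0 (- y t $ k) \<le> K * integral {t0..t} N"
proof -
  have N_int: "N integrable_on {s..u}" if "t0 \<le> s" "u \<le> t1" for s u
    unfolding N_def using that
    by (intro integrable_continuous_interval continuous_on_neg_part_sum continuous_on_subset[OF y_cont]) auto
  have N_int_nonneg: "0 \<le> integral {s..u} N" if "t0 \<le> s" "u \<le> t1" for s u
    using N_int[OF that] by (rule integral_nonneg) (simp add: N_def neg_part_sum_nonneg)
  show ?thesis
  proof (cases "0 \<le> y t $ k")
    case True
    then show ?thesis
      using N_int_nonneg[of t0 t] t K_nonneg by simp
  next
    case False
    have "continuous_on {t0..t} (\<lambda>x. y x $ k)"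
      using t by (intro continuous_intros continuous_on_subset[OF y_cont]) auto
    then obtain s where s: "t0 \<le> s" "s \<le> t" "y s $ k = 0" and neg: "\<And>x. x \<in> {s..t} \<Longrightarrow> y x $ k \<le> 0"
      using continuous_last_zero[of t0 t "\<lambda>x. y x $ k"] y0[of k] False t by auto
    \<comment> \<open>On \<open>[s, t]\<close> the \<open>k\<close>-th component is nonpositive, so only the negative parts can pull it down.\<close>
    have "- (K * integral {s..t} N) \<le> integral {s..t} (\<lambda>x. (A x *v y x) $ k)"
    proof -
      have "integral {s..t} (\<lambda>x. - (K * N x)) \<le> integral {s..t} (\<lambda>x. (A x *v y x) $ k)"
        using s t neg matrix_vector_mult_ge_neg_part matrix_vector_mult_integrable[OF y_cont, of s t k]
          integrable_neg[OF integrable_on_cmult_left[OF N_int[of s t], of K]]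
        by (intro integral_le) (auto simp: N_def)
      then show ?thesis
        by simp
    qed
    also have "\<dots> \<le> y t $ k"
      using y_super[of s t k] s t by simp
    finally have "- (K * integral {s..t} N) \<le> y t $ k" .
    moreover have "integral {s..t} N \<le> integral {t0..t} N"
      using Henstock_Kurzweil_Integration.integral_combine[of t0 s t N] N_int[of t0 t] N_int_nonneg[of t0 s] s t
      by auto
    ultimately show ?thesis
      using False K_nonneg mult_left_mono[of "integral {s..t} N" "integral {t0..t} N" K] by simp
  qed
qed

lemma supersolution_nonneg:
  assumes y_cont: "continuous_on {t0..t1} y"
    and y_super: "\<And>s u k. t0 \<le> s \<Longrightarrow> s \<le> u \<Longrightarrow> u \<le> t1 \<Longrightarrow>
        integral {s..u} (\<lambda>x. (A x *v y x) $ k) \<le> y u $ k - y s $ k"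
    and y0: "\<And>k. 0 \<le> y t0 $ k" and t: "t \<in> {t0..t1}"
  shows "0 \<le> y t $ k"
proof -
  define N where "N = (\<lambda>x. neg_part_sum (y x))"
  have "N u \<le> (CARD('n) * K) * integral {t0..u} N" if "u \<in> {t0..t1}" for u
  proof -
    have "N u \<le> (\<Sum>l\<in>(UNIV :: 'n set). K * integral {t0..u} N)"
      using neg_part_le_integral[OF y_cont y_super y0 that] unfolding N_def neg_part_sum_def
      by (intro sum_mono) auto
    then show ?thesis
      by simp
  qed
  moreover have "continuous_on {t0..t1} N"
    unfolding N_def by (intro continuous_on_neg_part_sum y_cont)
  ultimately have "N t \<le> 0"
    using K_nonneg by (intro gronwall_nonpos[where L = "CARD('n) * K", OF t0_le_t1 _ _ _ t]) auto
  then show ?thesis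
    using neg_part_le_neg_part_sum[of "y t" k] by (simp add: N_def)
qed

lemma solution_integral:
  assumes sol: "is_solution_on A \<zeta> t0 t1" and st: "t0 \<le> s" "s \<le> t" "t \<le> t1"
  shows "integral {s..t} (\<lambda>x. (A x *v \<zeta> x) $ k) = \<zeta> t $ k - \<zeta> s $ k"
proof -
  have from_t0: "integral {t0..u} (\<lambda>x. (A x *v \<zeta> x) $ k) = \<zeta> u $ k - \<zeta> t0 $ k"
    if "u \<in> {t0..t1}" for u
  proof -
    have "((\<lambda>x. A x *v \<zeta> x) has_integral (\<zeta> u - \<zeta> t0)) {t0..u}"
      using sol that by (simp add: is_solution_on_def)
    then show ?thesis
      by (simp add: integral_component_eq_cart[OF has_integral_integrable] integral_unique)
  qed
  have "integral {t0..s} (\<lambda>x. (A x *v \<zeta> x) $ k) + integral {s..t} (\<lambda>x. (A x *v \<zeta> x) $ k)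
      = integral {t0..t} (\<lambda>x. (A x *v \<zeta> x) $ k)"
    using sol st
    by (intro Henstock_Kurzweil_Integration.integral_combine matrix_vector_mult_integrable)
      (auto simp: is_solution_on_def)
  then show ?thesis
    using from_t0[of s] from_t0[of t] st by auto
qed

definition subsolution :: "(real \<Rightarrow> real^'n) \<Rightarrow> bool" where
  "subsolution z \<longleftrightarrow> continuous_on {t0..t1} z \<and>
     (\<forall>k. \<forall>x\<in>{t0<..<t1} - S. \<exists>d. ((\<lambda>t. z t $ k) has_real_derivative d) (at x) \<and> d \<le> (A x *v z x) $ k)"

lemma subsolution_integral_le:
  assumes z: "subsolution z" and st: "t0 \<le> s" "s \<le> t" "t \<le> t1"
  shows "z t $ k - z s $ k \<le> integral {s..t} (\<lambda>x. (A x *v z x) $ k)"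
proof -
  have z_cont: "continuous_on {t0..t1} z"
    using z by (simp add: subsolution_def)
  obtain d where d: "\<And>x. x \<in> {t0<..<t1} - S \<Longrightarrow>
      ((\<lambda>t. z t $ k) has_real_derivative d x) (at x) \<and> d x \<le> (A x *v z x) $ k"
    using z unfolding subsolution_def by metis
  define F where "F = (\<lambda>x. (A x *v z x) $ k)"
  have F: "bdd_continuous_off S t0 t1 F"
    unfolding F_def by (rule matrix_vector_mult_bdd_continuous_off[OF z_cont])
  have "integral {s..s} F - z s $ k \<le> integral {s..t} F - z t $ k"
  proof (rule DERIV_nonneg_off_finite_imp_le[OF finite_S st(2), of "\<lambda>u. integral {s..u} F - z u $ k"
        "\<lambda>x. F x - d x"])
    show "continuous_on {s..t} (\<lambda>u. integral {s..u} F - z u $ k)"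
      using st
      by (intro continuous_intros indefinite_integral_continuous_1
          bdd_continuous_off_integrable[OF finite_S F] continuous_on_subset[OF z_cont]) auto
    fix x assume x: "x \<in> {s<..<t} - S"
    then have "x \<in> {t0<..<t1} - S"
      using st by auto
    then show "((\<lambda>u. integral {s..u} F - z u $ k) has_real_derivative F x - d x) (at x) \<and> 0 \<le> F x - d x"
      using d bdd_continuous_off_integral_deriv[OF finite_S F st(1) st(3) x]
      by (auto intro: DERIV_diff simp: F_def)
  qed
  then show ?thesis
    by (simp add: F_def)
qed

lemma subsolution_le_solution:
  assumes sol: "is_solution_on A \<zeta> t0 t1" and z: "subsolution z"
    and init: "\<And>k. z t0 $ k \<le> \<zeta> t0 $ k" and t: "t \<in> {t0..t1}"
  shows "z t $ k \<le> \<zeta> t $ k"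
proof -
  have z_cont: "continuous_on {t0..t1} z"
    using z by (simp add: subsolution_def)
  have "0 \<le> (\<zeta> t - z t) $ k"
  proof (rule supersolution_nonneg[OF _ _ _ t])
    show "continuous_on {t0..t1} (\<lambda>x. \<zeta> x - z x)"
      using sol z_cont by (intro continuous_intros) (auto simp: is_solution_on_def)
    fix s u k assume st: "t0 \<le> s" "s \<le> u" "u \<le> t1"
    have "integral {s..u} (\<lambda>x. (A x *v (\<zeta> x - z x)) $ k)
        = integral {s..u} (\<lambda>x. (A x *v \<zeta> x) $ k) - integral {s..u} (\<lambda>x. (A x *v z x) $ k)"
      unfolding matrix_vector_mult_diff_distrib vector_minus_component
      using sol z_cont st by (intro integral_diff matrix_vector_mult_integrable) (auto simp: is_solution_on_def)
    also have "\<dots> \<le> (\<zeta> u $ k - \<zeta> s $ k) - (z u $ k - z s $ k)"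
      using solution_integral[OF sol st, of k] subsolution_integral_le[OF z st, of k] by simp
    finally show "integral {s..u} (\<lambda>x. (A x *v (\<zeta> x - z x)) $ k) \<le> (\<zeta> u - z u) $ k - (\<zeta> s - z s) $ k"
      by simp
  qed (use init in simp)
  then show ?thesis
    by simp
qed

lemma subsolution_affine:
  assumes z: "subsolution z" and \<gamma>: "0 \<le> \<gamma>"
  shows "subsolution (\<lambda>t. \<gamma> *\<^sub>R z t + (\<chi> i. \<mu>))"
  unfolding subsolution_def
proof (intro conjI allI ballI)
  show "continuous_on {t0..t1} (\<lambda>t. \<gamma> *\<^sub>R z t + (\<chi> i. \<mu>))"
    using z by (intro continuous_intros) (simp add: subsolution_def)
  fix k x assume x: "x \<in> {t0<..<t1} - S"
  obtain d where d: "((\<lambda>t. z t $ k) has_real_derivative d) (at x)" "d \<le> (A x *v z x) $ k"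
    using z x unfolding subsolution_def by blast
  \<comment> \<open>Zero row sums: the constant shift does not change \<open>A x *v _\<close>.\<close>
  have "(A x *v (\<gamma> *\<^sub>R z x + (\<chi> i. \<mu>))) $ k = \<gamma> * (A x *v z x) $ k"
    by (simp add: matrix_vector_mult_eq_sum_diff[of x] sum_distrib_left algebra_simps)
  moreover have "((\<lambda>t. (\<gamma> *\<^sub>R z t + (\<chi> i. \<mu>)) $ k) has_real_derivative \<gamma> * d) (at x)"
    using d(1) by (auto intro!: derivative_eq_intros)
  ultimately show "\<exists>d. ((\<lambda>t. (\<gamma> *\<^sub>R z t + (\<chi> i. \<mu>)) $ k) has_real_derivative d) (at x) \<and>
      d \<le> (A x *v (\<gamma> *\<^sub>R z x + (\<chi> i. \<mu>))) $ k"
    using d(2) \<gamma> by (auto intro: mult_left_mono)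
qed

subsection \<open>An explicit lower solution\<close>

lemma entry_integrable: "t0 \<le> s \<Longrightarrow> t \<le> t1 \<Longrightarrow> (\<lambda>x. A x $ k $ l) integrable_on {s..t}"
  by (rule bdd_continuous_off_integrable[OF finite_S entry_bdd_continuous_off])

definition coupling :: "'n set \<Rightarrow> 'n set \<Rightarrow> real \<Rightarrow> real" where
  "coupling I J = (\<lambda>x. \<Sum>k\<in>I. \<Sum>l\<in>J. A x $ k $ l)"

definition coupling_integral :: "'n set \<Rightarrow> 'n set \<Rightarrow> real \<Rightarrow> real" where
  "coupling_integral I J t = integral {t0..t} (coupling I J)"

lemma coupling_nonneg: "I \<inter> J = {} \<Longrightarrow> 0 \<le> coupling I J x"
  unfolding coupling_def by (intro sum_nonneg offdiag_nonneg) auto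

lemma coupling_bdd_continuous_off: "bdd_continuous_off S t0 t1 (coupling I J)"
  unfolding coupling_def by (intro bdd_continuous_off_sum entry_bdd_continuous_off) auto

lemma coupling_integrable: "t0 \<le> s \<Longrightarrow> t \<le> t1 \<Longrightarrow> coupling I J integrable_on {s..t}"
  by (rule bdd_continuous_off_integrable[OF finite_S coupling_bdd_continuous_off])

lemma coupling_integral_continuous: "continuous_on {t0..t1} (coupling_integral I J)"
  unfolding coupling_integral_def[abs_def]
  by (intro indefinite_integral_continuous_1 coupling_integrable) auto

lemma coupling_integral_deriv:
  "x \<in> {t0<..<t1} - S \<Longrightarrow> (coupling_integral I J has_real_derivative coupling I J x) (at x)"
  unfolding coupling_integral_def[abs_def]
  by (rule bdd_continuous_off_integral_deriv[OF finite_S coupling_bdd_continuous_off]) auto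

lemma coupling_integral_t0 [simp]: "coupling_integral I J t0 = 0"
  by (simp add: coupling_integral_def)

lemma coupling_integral_mono:
  assumes "I \<inter> J = {}" "t0 \<le> s" "s \<le> t" "t \<le> t1"
  shows "coupling_integral I J s \<le> coupling_integral I J t"
proof -
  have "integral {t0..s} (coupling I J) + integral {s..t} (coupling I J) = integral {t0..t} (coupling I J)"
    using assms by (intro Henstock_Kurzweil_Integration.integral_combine coupling_integrable) auto
  moreover have "0 \<le> integral {s..t} (coupling I J)"
    using assms by (intro integral_nonneg coupling_integrable coupling_nonneg) auto
  ultimately show ?thesis
    by (simp add: coupling_integral_def)
qed

lemma coupling_integral_nonneg: "I \<inter> J = {} \<Longrightarrow> t \<in> {t0..t1} \<Longrightarrow> 0 \<le> coupling_integral I J t"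
  using coupling_integral_mono[of I J t0 t] by simp

lemma coupling_integral_final:
  "coupling_integral I J t1 = (\<Sum>k\<in>I. \<Sum>l\<in>J. integral {t0..t1} (\<lambda>x. A x $ k $ l))"
proof -
  have "coupling_integral I J t1 = (\<Sum>k\<in>I. integral {t0..t1} (\<lambda>x. \<Sum>l\<in>J. A x $ k $ l))"
    unfolding coupling_integral_def coupling_def
    by (intro integral_sum bdd_continuous_off_integrable[OF finite_S]
        bdd_continuous_off_sum) (auto intro: entry_bdd_continuous_off)
  also have "\<dots> = (\<Sum>k\<in>I. \<Sum>l\<in>J. integral {t0..t1} (\<lambda>x. A x $ k $ l))"
    by (intro sum.cong refl integral_sum entry_integrable) auto
  finally show ?thesis .
qed

definition lower_profile :: "'n set \<Rightarrow> 'n set \<Rightarrow> 'n \<Rightarrow> real \<Rightarrow> real^'n" where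
  "lower_profile G H k t = (\<chi> i.
     if i \<in> G then exp (- coupling_integral G H t)
     else if i = k then exp (- coupling_integral G H t1) * exp (- coupling_integral {k} (H - {k}) t)
       * (1 - exp (- coupling_integral {k} G t))
     else 0)"

lemma lower_profile_nonneg:
  assumes "k \<notin> G" "t \<in> {t0..t1}"
  shows "0 \<le> lower_profile G H k t $ i"
  using assms coupling_integral_nonneg[of "{k}" G t] by (simp add: lower_profile_def)

lemma lower_profile_t0: "k \<notin> G \<Longrightarrow> lower_profile G H k t0 $ i = (if i \<in> G then 1 else 0)"
  by (simp add: lower_profile_def)

lemma lower_profile_continuous: "continuous_on {t0..t1} (lower_profile G H k)"
  unfolding lower_profile_def
proof (rule continuous_on_vec_lambda)
  fix i
  show "continuous_on {t0..t1} (\<lambda>t. if i \<in> G then exp (- coupling_integral G H t)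
      else if i = k then exp (- coupling_integral G H t1) * exp (- coupling_integral {k} (H - {k}) t)
        * (1 - exp (- coupling_integral {k} G t))
      else 0)"
    by (cases "i \<in> G"; cases "i = k") (auto intro!: continuous_intros coupling_integral_continuous)
qed

lemma lower_profile_row_in_G:
  assumes disj: "G \<inter> H = {}" and cover: "G \<union> H = UNIV" and k: "k \<in> H" and i: "i \<in> G"
    and x: "x \<in> {t0<..<t1} - S"
  shows "\<exists>d. ((\<lambda>t. lower_profile G H k t $ i) has_real_derivative d) (at x)
    \<and> d \<le> (A x *v lower_profile G H k x) $ i"
proof -
  let ?v = "lower_profile G H k x"
  let ?e = "exp (- coupling_integral G H x)"
  have "((\<lambda>t. lower_profile G H k t $ i) has_real_derivative - coupling G H x * ?e) (at x)"
    using i x by (auto simp: lower_profile_def intro!: derivative_eq_intros coupling_integral_deriv)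
  moreover have "- coupling G H x * ?e \<le> (A x *v ?v) $ i"
  proof -
    have "(\<Sum>l\<in>H. A x $ i $ l) \<le> coupling G H x"
      unfolding coupling_def using i disj
      by (intro member_le_sum sum_nonneg offdiag_nonneg) auto
    then have "- coupling G H x * ?e \<le> - ((\<Sum>l\<in>H. A x $ i $ l) * ?e)"
      by (simp add: mult_right_mono)
    also have "\<dots> = (\<Sum>l\<in>H. A x $ i $ l * - ?e)"
      by (simp add: sum_distrib_right sum_negf)
    also have "\<dots> \<le> (A x *v ?v) $ i"
    proof (rule matrix_vector_mult_ge_sum)
      show "H \<subseteq> UNIV - {i}"
        using i disj by auto
      have v_i: "?v $ i = ?e"
        using i by (simp add: lower_profile_def)
      have v_G: "?v $ l = ?e" if "l \<notin> H" for l
        using that cover by (auto simp: lower_profile_def)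
      have "0 \<le> ?v $ l" for l
        using x k disj by (intro lower_profile_nonneg) auto
      then show "- ?e \<le> ?v $ l - ?v $ i" for l
        using v_i by simp
      show "0 \<le> ?v $ l - ?v $ i" if "l \<notin> H" for l
        using v_i v_G[OF that] by simp
    qed
    finally show ?thesis .
  qed
  ultimately show ?thesis
    by blast
qed

lemma lower_profile_row_k_ge:
  assumes disj: "G \<inter> H = {}" and cover: "G \<union> H = UNIV" and k: "k \<in> H" and x: "x \<in> {t0..t1}"
  defines "v \<equiv> lower_profile G H k x" and "E \<equiv> exp (- coupling_integral G H t1)"
  shows "(E - v $ k) * coupling {k} G x - v $ k * coupling {k} (H - {k}) x \<le> (A x *v v) $ k"
proof -
  let ?u = "\<lambda>l. if l \<in> G then E - v $ k else - v $ k"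
  have "(E - v $ k) * coupling {k} G x - v $ k * coupling {k} (H - {k}) x
      = (\<Sum>l\<in>G. A x $ k $ l * (E - v $ k)) + (\<Sum>l\<in>H - {k}. A x $ k $ l * - v $ k)"
    by (simp add: coupling_def sum_distrib_left sum_distrib_right sum_negf mult.commute)
  also have "\<dots> = (\<Sum>l\<in>G. A x $ k $ l * ?u l) + (\<Sum>l\<in>H - {k}. A x $ k $ l * ?u l)"
    using disj by (intro arg_cong2[where f = "(+)"] sum.cong) auto
  also have "\<dots> = (\<Sum>l\<in>G \<union> (H - {k}). A x $ k $ l * ?u l)"
    using disj by (intro sum.union_disjoint[symmetric]) auto
  also have "\<dots> \<le> (A x *v v) $ k"
  proof (rule matrix_vector_mult_ge_sum)
    have kG: "k \<notin> G"
      using disj k by auto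
    then show "G \<union> (H - {k}) \<subseteq> UNIV - {k}"
      by auto
    have "E \<le> exp (- coupling_integral G H x)"
      using coupling_integral_mono[OF disj, of x t1] x by (simp add: E_def)
    then show "?u l \<le> v $ l - v $ k" if "l \<in> G \<union> (H - {k})" for l
      using that kG disj by (auto simp: v_def lower_profile_def)
    show "0 \<le> v $ l - v $ k" if "l \<notin> G \<union> (H - {k})" "l \<noteq> k" for l
      using that cover by auto
  qed
  finally show ?thesis .
qed

lemma lower_profile_row_k:
  assumes disj: "G \<inter> H = {}" and cover: "G \<union> H = UNIV" and k: "k \<in> H"
    and x: "x \<in> {t0<..<t1} - S"
  shows "\<exists>d. ((\<lambda>t. lower_profile G H k t $ k) has_real_derivative d) (at x)
    \<and> d \<le> (A x *v lower_profile G H k x) $ k"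
proof -
  define E where "E = exp (- coupling_integral G H t1)"
  define P where "P = coupling_integral {k} G"
  define R where "R = coupling_integral {k} (H - {k})"
  define p where "p = coupling {k} G x"
  define r where "r = coupling {k} (H - {k}) x"
  define d where "d = E * (exp (- R x) * p * exp (- P x) - r * exp (- R x) * (1 - exp (- P x)))"
  have kG: "k \<notin> G"
    using disj k by auto
  have x': "x \<in> {t0..t1}"
    using x by auto
  have "((\<lambda>t. lower_profile G H k t $ k) has_real_derivative d) (at x)"
    using kG x unfolding d_def E_def P_def R_def p_def r_def
    by (auto simp: lower_profile_def algebra_simps intro!: derivative_eq_intros coupling_integral_deriv)
  moreover have "d \<le> (A x *v lower_profile G H k x) $ k"
  proof -
    define w where "w = E * exp (- R x) * (1 - exp (- P x))"
    have "0 \<le> E * p * (1 - exp (- R x))"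
      using coupling_nonneg[of "{k}" G x] coupling_integral_nonneg[of "{k}" "H - {k}" x] kG x'
      by (simp add: E_def p_def R_def)
    then have "d \<le> (E - w) * p - w * r"
      by (simp add: d_def w_def algebra_simps)
    also have "\<dots> \<le> (A x *v lower_profile G H k x) $ k"
      using lower_profile_row_k_ge[OF disj cover k x'] kG
      by (simp add: lower_profile_def w_def E_def P_def R_def p_def r_def)
    finally show ?thesis .
  qed
  ultimately show ?thesis
    by blast
qed

lemma lower_profile_row_other:
  assumes kG: "k \<notin> G" and i: "i \<notin> G" "i \<noteq> k" and x: "x \<in> {t0<..<t1} - S"
  shows "\<exists>d. ((\<lambda>t. lower_profile G H k t $ i) has_real_derivative d) (at x)
    \<and> d \<le> (A x *v lower_profile G H k x) $ i"
proof -
  have "((\<lambda>t. lower_profile G H k t $ i) has_real_derivative 0) (at x)"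
    using i by (simp add: lower_profile_def)
  moreover have "(\<Sum>l\<in>{}. A x $ i $ l * 0) \<le> (A x *v lower_profile G H k x) $ i"
  proof (rule matrix_vector_mult_ge_sum)
    have "0 \<le> lower_profile G H k x $ l" for l
      using kG x by (intro lower_profile_nonneg) auto
    moreover have "lower_profile G H k x $ i = 0"
      using i by (simp add: lower_profile_def)
    ultimately show "0 \<le> lower_profile G H k x $ l - lower_profile G H k x $ i"
      if "l \<notin> {}" "l \<noteq> i" for l
      by simp
  qed auto
  ultimately show ?thesis
    by auto
qed

lemma lower_profile_subsolution:
  assumes "G \<inter> H = {}" "G \<union> H = UNIV" "k \<in> H"
  shows "subsolution (lower_profile G H k)"
  unfolding subsolution_def
proof (intro conjI allI ballI lower_profile_continuous)
  fix i x assume x: "x \<in> {t0<..<t1} - S"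
  have "k \<notin> G"
    using assms by auto
  consider "i \<in> G" | "i = k" | "i \<notin> G" "i \<noteq> k"
    by blast
  then show "\<exists>d. ((\<lambda>t. lower_profile G H k t $ i) has_real_derivative d) (at x)
      \<and> d \<le> (A x *v lower_profile G H k x) $ i"
  proof cases
    case 1
    show ?thesis
      using lower_profile_row_in_G[OF assms 1 x] .
  next
    case 2
    then show ?thesis
      using lower_profile_row_k[OF assms x] by simp
  next
    case 3
    show ?thesis
      using lower_profile_row_other[OF \<open>k \<notin> G\<close> 3 x] .
  qed
qed

lemma solution_lower_bound:
  assumes disj: "G \<inter> H = {}" and cover: "G \<union> H = UNIV" and k: "k \<in> H"
    and sol: "is_solution_on A \<zeta> t0 t1"
    and \<mu>: "\<forall>i. \<mu> \<le> \<zeta> t0 $ i" and g: "\<forall>i\<in>G. g \<le> \<zeta> t0 $ i" and \<mu>g: "\<mu> \<le> g"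
  shows "\<mu> + (g - \<mu>) * lower_profile G H k t1 $ i \<le> \<zeta> t1 $ i"
proof -
  let ?z = "\<lambda>t. (g - \<mu>) *\<^sub>R lower_profile G H k t + (\<chi> i. \<mu>)"
  have kG: "k \<notin> G"
    using disj k by auto
  have z_sub: "subsolution ?z"
    using lower_profile_subsolution[OF disj cover k] \<mu>g by (intro subsolution_affine) auto
  have z_t0: "?z t0 $ j \<le> \<zeta> t0 $ j" for j
  proof (cases "j \<in> G")
    case True
    then show ?thesis
      using g lower_profile_t0[OF kG, of H j] by simp
  next
    case False
    then show ?thesis
      using \<mu> lower_profile_t0[OF kG, of H j] by simp
  qed
  have "?z t1 $ i \<le> \<zeta> t1 $ i"
    using t0_le_t1 by (intro subsolution_le_solution[OF sol z_sub z_t0]) auto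
  then show ?thesis
    by (simp add: algebra_simps)
qed

lemma solution_bounds:
  assumes disj: "G \<inter> H = {}" and cover: "G \<union> H = UNIV" and k: "k \<in> H"
    and sol: "is_solution_on A \<zeta> t0 t1"
    and "\<forall>i. \<mu>min \<le> \<zeta> t0 $ i" "\<forall>i. \<zeta> t0 $ i \<le> \<mu>max"
    and "\<forall>i\<in>G. gmin \<le> \<zeta> t0 $ i" "\<forall>i\<in>G. \<zeta> t0 $ i \<le> gmax"
    and "\<mu>min \<le> gmin" "gmax \<le> \<mu>max"
  shows "\<mu>min + (gmin - \<mu>min) * lower_profile G H k t1 $ i \<le> \<zeta> t1 $ i
    \<and> \<zeta> t1 $ i \<le> \<mu>max - (\<mu>max - gmax) * lower_profile G H k t1 $ i"
proof
  show "\<mu>min + (gmin - \<mu>min) * lower_profile G H k t1 $ i \<le> \<zeta> t1 $ i"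
    using assms by (intro solution_lower_bound[OF disj cover k sol]) auto
  have "- \<mu>max + (- gmax - - \<mu>max) * lower_profile G H k t1 $ i \<le> (- \<zeta> t1) $ i"
    using assms is_solution_on_uminus[OF sol]
    by (intro solution_lower_bound[OF disj cover k, where \<zeta> = "\<lambda>t. - \<zeta> t"]) auto
  then show "\<zeta> t1 $ i \<le> \<mu>max - (\<mu>max - gmax) * lower_profile G H k t1 $ i"
    by (simp add: algebra_simps)
qed

lemma exists_node_lower_profile_ge_beta:
  assumes disj: "G \<inter> H = {}" and H: "H \<noteq> {}"
  defines "aGH \<equiv> coupling_integral G H t1"
    and "aHG \<equiv> \<Sum>k\<in>H. coupling_integral {k} G t1"
    and "aHH \<equiv> \<Sum>k\<in>H. coupling_integral {k} (H - {k}) t1"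
  shows "\<exists>k\<in>H. (exp (- aGH) * aHG / real (card H)) / (1 + exp aHH * aHG / real (card H) + exp aHH * aHH)
    \<le> lower_profile G H k t1 $ k"
proof -
  define P where "P k = coupling_integral {k} G t1" for k
  define R where "R k = coupling_integral {k} (H - {k}) t1" for k
  have P_nonneg: "0 \<le> P k" if "k \<in> H" for k
    using that disj t0_le_t1 by (auto simp: P_def intro: coupling_integral_nonneg)
  have R_nonneg: "0 \<le> R k" for k
    using t0_le_t1 by (auto simp: R_def intro: coupling_integral_nonneg)
  \<comment> \<open>The node of \<open>H\<close> most strongly coupled to \<open>G\<close> receives at least the average coupling.\<close>
  have "Max (P ` H) \<in> P ` H"
    using H by (intro Max_in) auto
  then obtain k where k: "k \<in> H" "P k = Max (P ` H)"
    by auto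
  then have "aHG \<le> real (card H) * P k"
    unfolding aHG_def P_def[symmetric] by (intro sum_bounded_above) auto
  then have avg: "aHG / real (card H) \<le> P k"
    using H by (simp add: divide_le_eq card_gt_0_iff mult.commute)
  have "0 \<le> aHG / real (card H)"
    unfolding aHG_def P_def[symmetric] using P_nonneg by (simp add: sum_nonneg)
  moreover have "R k \<le> aHH"
    unfolding aHH_def R_def[symmetric] using k R_nonneg by (intro member_le_sum) auto
  ultimately have "aHG / real (card H) / (1 + exp aHH * (aHG / real (card H)) + exp aHH * aHH)
      \<le> exp (- R k) * (1 - exp (- P k))"
    using avg R_nonneg by (intro fraction_le_exp_one_minus_exp) auto
  then have "exp (- aGH) * (aHG / real (card H) / (1 + exp aHH * (aHG / real (card H)) + exp aHH * aHH))
      \<le> exp (- aGH) * (exp (- R k) * (1 - exp (- P k)))"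
    by (rule mult_left_mono) simp
  then have "(exp (- aGH) * aHG / real (card H)) / (1 + exp aHH * aHG / real (card H) + exp aHH * aHH)
      \<le> exp (- aGH) * (exp (- R k) * (1 - exp (- P k)))"
    by simp
  also have "\<dots> = lower_profile G H k t1 $ k"
    using disj k by (auto simp: lower_profile_def aGH_def P_def R_def)
  finally show ?thesis
    using k by blast
qed

end

theorem lemma1:
  fixes A :: "real \<Rightarrow> real^'n^'n" and \<zeta> :: "real \<Rightarrow> real^'n"
    and t0 t1 \<mu>min \<mu>max :: real and G H :: "'n set"
  assumes pc: "piecewise_continuous A"
    and MZ: "\<And>t. metzler (A t) \<and> zero_row_sums (A t)"
    and t01: "t0 \<le> t1"
    and sol: "is_solution_on A \<zeta> t0 t1"
    and G_ne: "G \<noteq> {}" and H_ne: "H \<noteq> {}" and disj: "G \<inter> H = {}" and cover: "G \<union> H = UNIV"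
    and mumin: "\<forall>k. \<mu>min \<le> \<zeta> t0 $ k"
    and mumax: "\<forall>k. \<zeta> t0 $ k \<le> \<mu>max"
  defines "aGH \<equiv> (\<Sum>k\<in>G. \<Sum>l\<in>H. integral {t0..t1} (\<lambda>t. A t $ k $ l))"
    and "aHG \<equiv> (\<Sum>k\<in>H. \<Sum>l\<in>G. integral {t0..t1} (\<lambda>t. A t $ k $ l))"
    and "aHH \<equiv> (\<Sum>k\<in>H. \<Sum>l\<in>H - {k}. integral {t0..t1} (\<lambda>t. A t $ k $ l))"
    and "gmin \<equiv> Min ((\<lambda>k. \<zeta> t0 $ k) ` G)"
    and "gmax \<equiv> Max ((\<lambda>k. \<zeta> t0 $ k) ` G)"
  shows "(\<forall>k\<in>G. \<mu>min + (gmin - \<mu>min) * exp (- aGH) \<le> \<zeta> t1 $ k \<and>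
                 \<zeta> t1 $ k \<le> \<mu>max - (\<mu>max - gmax) * exp (- aGH))
       \<and> (\<exists>k\<in>H. \<mu>min + (gmin - \<mu>min) * ((exp (- aGH) * aHG / real (card H)) / (1 + exp aHH * aHG / real (card H) + exp aHH * aHH)) \<le> \<zeta> t1 $ k \<and>
                 \<zeta> t1 $ k \<le> \<mu>max - (\<mu>max - gmax) * ((exp (- aGH) * aHG / real (card H)) / (1 + exp aHH * aHG / real (card H) + exp aHH * aHH)))"
proof -
  obtain K S where "consensus_system A t0 t1 K S"
    using consensus_system_if_piecewise_continuous[OF pc MZ t01] .
  then interpret consensus_system A t0 t1 K S .
  define \<beta> where "\<beta> = (exp (- aGH) * aHG / real (card H)) / (1 + exp aHH * aHG / real (card H) + exp aHH * aHH)"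
  have "aGH = coupling_integral G H t1"
    by (simp add: aGH_def coupling_integral_final)
  moreover obtain k where k: "k \<in> H" "\<beta> \<le> lower_profile G H k t1 $ k"
    using exists_node_lower_profile_ge_beta[OF disj H_ne]
    by (auto simp: \<beta>_def aGH_def aHG_def aHH_def coupling_integral_final)
  ultimately have profile_G: "lower_profile G H k t1 $ i = exp (- aGH)" if "i \<in> G" for i
    using that by (simp add: lower_profile_def)
  have G_bounds: "\<mu>min \<le> gmin" "\<forall>i\<in>G. gmin \<le> \<zeta> t0 $ i" "\<forall>i\<in>G. \<zeta> t0 $ i \<le> gmax" "gmax \<le> \<mu>max"
    using G_ne mumin mumax Min_in[of "(\<lambda>k. \<zeta> t0 $ k) ` G"] Max_in[of "(\<lambda>k. \<zeta> t0 $ k) ` G"]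
    by (auto simp: gmin_def gmax_def)
  note bounds = solution_bounds[OF disj cover k(1) sol mumin mumax G_bounds(2,3,1,4)]
  have "(gmin - \<mu>min) * \<beta> \<le> (gmin - \<mu>min) * lower_profile G H k t1 $ k"
    "(\<mu>max - gmax) * \<beta> \<le> (\<mu>max - gmax) * lower_profile G H k t1 $ k"
    using k(2) G_bounds by (simp_all add: mult_left_mono)
  then have "\<mu>min + (gmin - \<mu>min) * \<beta> \<le> \<zeta> t1 $ k \<and> \<zeta> t1 $ k \<le> \<mu>max - (\<mu>max - gmax) * \<beta>"
    using bounds[of k] by linarith
  moreover have "\<mu>min + (gmin - \<mu>min) * exp (- aGH) \<le> \<zeta> t1 $ i
      \<and> \<zeta> t1 $ i \<le> \<mu>max - (\<mu>max - gmax) * exp (- aGH)" if "i \<in> G" for i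
    using bounds[of i] unfolding profile_G[OF that] .
  ultimately show ?thesis
    using k(1) unfolding \<beta>_def by blast
qed

end
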